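(* Let $G$, $P$, $\pi$, $v_{\mathrm{root}}$, $\alpha\in(0,1)$ be as in the context, with $P$ fixed, let $0<\zeta<\frac{1-\alpha}{\alpha}P_{\min}$, $\epsilon>0$, $S=\sum_{a\in\Sigma}(\sum_{e:L(e)=a}P(e))^2$ and $\delta=1-S-\epsilon$. For each prefix length $n'$ let $\mathcal W_{n'}$ be the set of $\zeta$-typical paths defined in the context and let $$P(E_{\mathrm{bad}})=\sum P(\mathbf w)P(\mathbf w'),$$ the sum running over pairs of distinct $\mathbf w,\mathbf w'\in\mathcal W_{n'}$ with $d_H(L(\mathbf w),L(\mathbf w'))/n'<\delta$. Then $$\limsup_{n'\to\infty}\frac{1}{n'}\log P(E_{\mathrm{bad}})\le-\inf_{Q\in A_{\zeta,\delta}}\bigl(2H(P)-H(Q)\bigr)+\mathcal O(\zeta),$$ where the constant in the $\mathcal O$ notation depends only on $P$.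
   Context: $G=(V,E,L)$ is a deterministic, lossless, primitive labeled directed graph over a finite alphabet $\Sigma$; edge $e$ has initial vertex $\sigma(e)$, terminal vertex $\tau(e)$, label $L(e)$. $P$ is a probability mass function on $E$ with $P(e)>0$ for all $e$, stationary: with $\pi(u)=\sum_{e:\sigma(e)=u}P(e)$, $\pi(u)=\sum_{e:\tau(e)=u}P(e)$. Write $p(\tau(e)\mid\sigma(e))=P(e)/\pi(\sigma(e))$. $H(P)=-\sum_eP(e)\log_2\frac{P(e)}{\pi(\sigma(e))}$ and $P_{\min}=\min_eP(e)$. $v_{\mathrm{root}}\in V$ is fixed. $\mathcal W_{n'}$ is the set of paths $\mathbf w=(e_1,\dots,e_{n'})$ in $G$ with $\sigma(e_1)=v_{\mathrm{root}}$ and $|S_{\mathbf w}(e)/n'-P(e)|<\zeta$ for all $e\in E$, where $S_{\mathbf w}(e)=|\{i:e_i=e\}|$; $P(\mathbf w)=\prod_{i=1}^{n'}p(\tau(e_i)\mid\sigma(e_i))$ is the probability that a random walk governed by $P$ from $v_{\mathrm{root}}$ equals $\mathbf w$ (at vertex $u$ the next edge $e$ is chosen with probability $P(e)/\pi(u)$). $d_H$ is Hamming distance between label sequences. (In the paper these prefixes are those of the codewords of $\mathcal C_{\mathrm{pool}}$, and $P(E_{\mathrm{bad}})$ is the mass of bad pairs of codewords.) Product graph $\mathcal G=G\times G$: vertex set $V\times V$, an edge $(e,e')$ from $(\sigma(e),\sigma(e'))$ to $(\tau(e),\tau(e'))$ for each $e,e'\in E$. $\mathcal M_s$ is the set of probability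 measures $Q$ on edges of $\mathcal G$ that are stationary (distribution of initial vertices equals distribution of terminal vertices); $H(Q)=-\sum_{\mathbf e}Q(\mathbf e)\log\frac{Q(\mathbf e)}{Q_1(\sigma(\mathbf e))}$ with $Q_1$ the initial-vertex marginal. $Q_w(e)=\sum_{e'}Q(e,e')$, $Q_{w'}(e')=\sum_eQ(e,e')$, $f(e,e')=\mathbb 1[L(e)\ne L(e')]$, and $A_{\zeta,\delta}=\{Q\in\mathcal M_s:|Q_w(e)-P(e)|<\zeta,\ |Q_{w'}(e)-P(e)|<\zeta\ \forall e\in E,\ \mathbb E_Q[f]\le\delta\}$. *)

theory Defs
  imports Complex_Main "HOL-Library.Extended_Real" "HOL-Library.Liminf_Limsup"
begin

text \<open>Labeled directed graph G = (V,E,L): vertices = finite type 'v, edges = finite type 'e,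
  initial vertex sig, terminal vertex tau, labels L :: 'e => 'l (alphabet = finite type 'l).\<close>

definition is_path :: "('e \<Rightarrow> 'v) \<Rightarrow> ('e \<Rightarrow> 'v) \<Rightarrow> 'e list \<Rightarrow> bool" where
  "is_path sig tau p \<longleftrightarrow> (\<forall>i. Suc i < length p \<longrightarrow> tau (p ! i) = sig (p ! Suc i))"

definition deterministic :: "('e \<Rightarrow> 'v) \<Rightarrow> ('e \<Rightarrow> 'l) \<Rightarrow> bool" where
  "deterministic sig L \<longleftrightarrow> (\<forall>e e'. sig e = sig e' \<and> L e = L e' \<longrightarrow> e = e')"

definition lossless :: "('e \<Rightarrow> 'v) \<Rightarrow> ('e \<Rightarrow> 'v) \<Rightarrow> ('e \<Rightarrow> 'l) \<Rightarrow> bool" where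
  "lossless sig tau L \<longleftrightarrow>
     (\<forall>p q. is_path sig tau p \<and> is_path sig tau q \<and> p \<noteq> [] \<and> q \<noteq> [] \<and>
        sig (hd p) = sig (hd q) \<and> tau (last p) = tau (last q) \<and> map L p = map L q \<longrightarrow> p = q)"

definition primitive :: "('e \<Rightarrow> 'v) \<Rightarrow> ('e \<Rightarrow> 'v) \<Rightarrow> bool" where
  "primitive sig tau \<longleftrightarrow>
     (\<exists>k>0. \<forall>u v. \<exists>p. is_path sig tau p \<and> length p = k \<and> sig (hd p) = u \<and> tau (last p) = v)"

definition vmarg :: "('e::finite \<Rightarrow> 'v) \<Rightarrow> ('e \<Rightarrow> real) \<Rightarrow> 'v \<Rightarrow> real" where
  "vmarg sig P u = (\<Sum>e\<in>{e. sig e = u}. P e)"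

definition stationary_edge_pmf :: "('e::finite \<Rightarrow> 'v) \<Rightarrow> ('e \<Rightarrow> 'v) \<Rightarrow> ('e \<Rightarrow> real) \<Rightarrow> bool" where
  "stationary_edge_pmf sig tau P \<longleftrightarrow>
     (\<forall>e. P e > 0) \<and> (\<Sum>e\<in>UNIV. P e) = 1 \<and> (\<forall>u. vmarg sig P u = vmarg tau P u)"

definition entropy_P :: "('e::finite \<Rightarrow> 'v) \<Rightarrow> ('e \<Rightarrow> real) \<Rightarrow> real" where
  "entropy_P sig P = - (\<Sum>e\<in>UNIV. P e * log 2 (P e / vmarg sig P (sig e)))"

definition Pmin :: "('e::finite \<Rightarrow> real) \<Rightarrow> real" where
  "Pmin P = Min (range P)"

definition path_prob :: "('e \<Rightarrow> 'v) \<Rightarrow> ('e::finite \<Rightarrow> real) \<Rightarrow> 'e list \<Rightarrow> real" where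
  "path_prob sig P w = (\<Prod>i<length w. P (w ! i) / vmarg sig P (sig (w ! i)))"

definition typical_paths ::
  "('e::finite \<Rightarrow> 'v) \<Rightarrow> ('e \<Rightarrow> 'v) \<Rightarrow> ('e \<Rightarrow> real) \<Rightarrow> 'v \<Rightarrow> real \<Rightarrow> nat \<Rightarrow> 'e list set" where
  "typical_paths sig tau P vroot \<zeta> n =
     {w. is_path sig tau w \<and> length w = n \<and> w \<noteq> [] \<and> sig (hd w) = vroot \<and>
         (\<forall>e. \<bar>real (count_list w e) / real n - P e\<bar> < \<zeta>)}"

definition hamming :: "'a list \<Rightarrow> 'a list \<Rightarrow> nat" where
  "hamming x y = card {i. i < length x \<and> i < length y \<and> x ! i \<noteq> y ! i}"

definition P_bad ::
  "('e::finite \<Rightarrow> 'v) \<Rightarrow> ('e \<Rightarrow> 'v) \<Rightarrow> ('e \<Rightarrow> 'l) \<Rightarrow> ('e \<Rightarrow> real) \<Rightarrow> 'v \<Rightarrow> real \<Rightarrow> real \<Rightarrow> nat \<Rightarrow> real" where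
  "P_bad sig tau L P vroot \<zeta> \<delta> n =
     (\<Sum>(w, w') \<in> {(w, w'). w \<in> typical_paths sig tau P vroot \<zeta> n \<and> w' \<in> typical_paths sig tau P vroot \<zeta> n
                     \<and> w \<noteq> w' \<and> real (hamming (map L w) (map L w')) / real n < \<delta>}.
        path_prob sig P w * path_prob sig P w')"

definition log_rate :: "real \<Rightarrow> nat \<Rightarrow> ereal" where
  "log_rate p n = (if p = 0 then -\<infinity> else ereal (log 2 p / real n))"

text \<open>Product graph G x G: edges are pairs (e,e'), from (sig e, sig e') to (tau e, tau e').\<close>
definition Q_init :: "('e \<Rightarrow> 'v) \<Rightarrow> ('e \<times> 'e \<Rightarrow> real) \<Rightarrow> 'v \<times> 'v \<Rightarrow> real" where
  "Q_init sig Q x = (\<Sum>p\<in>{p. (sig (fst p), sig (snd p)) = x}. Q p)"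

definition Q_term :: "('e \<Rightarrow> 'v) \<Rightarrow> ('e \<times> 'e \<Rightarrow> real) \<Rightarrow> 'v \<times> 'v \<Rightarrow> real" where
  "Q_term tau Q x = (\<Sum>p\<in>{p. (tau (fst p), tau (snd p)) = x}. Q p)"

definition stationary_prod_measures :: "('e::finite \<Rightarrow> 'v) \<Rightarrow> ('e \<Rightarrow> 'v) \<Rightarrow> ('e \<times> 'e \<Rightarrow> real) set" where
  "stationary_prod_measures sig tau =
     {Q. (\<forall>p. Q p \<ge> 0) \<and> (\<Sum>p\<in>UNIV. Q p) = 1 \<and> (\<forall>x. Q_init sig Q x = Q_term tau Q x)}"

definition entropy_Q :: "('e::finite \<Rightarrow> 'v) \<Rightarrow> ('e \<times> 'e \<Rightarrow> real) \<Rightarrow> real" where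
  "entropy_Q sig Q = - (\<Sum>p\<in>UNIV. Q p * log 2 (Q p / Q_init sig Q (sig (fst p), sig (snd p))))"

definition A_set ::
  "('e::finite \<Rightarrow> 'v) \<Rightarrow> ('e \<Rightarrow> 'v) \<Rightarrow> ('e \<Rightarrow> 'l) \<Rightarrow> ('e \<Rightarrow> real) \<Rightarrow> real \<Rightarrow> real \<Rightarrow> ('e \<times> 'e \<Rightarrow> real) set" where
  "A_set sig tau L P \<zeta> \<delta> =
     {Q \<in> stationary_prod_measures sig tau.
        (\<forall>e. \<bar>(\<Sum>e'\<in>UNIV. Q (e, e')) - P e\<bar> < \<zeta>) \<and>
        (\<forall>e. \<bar>(\<Sum>e'\<in>UNIV. Q (e', e)) - P e\<bar> < \<zeta>) \<and>
        (\<Sum>p\<in>UNIV. Q p * (if L (fst p) \<noteq> L (snd p) then 1 else 0)) \<le> \<delta>}"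

end

theory Submission
  imports Defs "HOL-Library.FuncSet" "HOL-Real_Asymp.Real_Asymp"
begin

text \<open>
  Let (w, w') be a bad pair and T the empirical distribution of the pair path zip w w' in the
  product graph. Typicality gives P(w) P(w') <= 2^(-n (2 H(P) - O(zeta))), while the Markov chain on
  the product graph with transition law T gives zip w w' the probability 2^(-n H(T)).
  Closing w and w' back to the root by paths of a fixed length k (primitivity) makes the empirical
  distribution of the closed pair stationary; mixing it with the diagonal coupling of P (marginals P,
  no disagreement) restores the marginal and disagreement constraints, so the mixture lies in A, and
  by concavity its entropy is at least (1 - o(1)) H(T). Hence H(T) <= 2 H(P) - I + o(1), where I is
  the infimum of 2 H(P) - H(Q) over A, and each bad pair carries at most 2^(n (O(zeta) - I + o(1)))
  times its product-chain probability. For a fixed transition law these probabilities sum to at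
  most 1 over all paths, and there are only polynomially many empirical distributions.
\<close>

section \<open>Paths and occurrence counts\<close>

lemma is_path_Nil: "is_path sig tau []"
  by (simp add: is_path_def)

lemma is_path_Cons: "is_path sig tau (e # w) \<longleftrightarrow> (w \<noteq> [] \<longrightarrow> tau e = sig (hd w)) \<and> is_path sig tau w"
  by (cases w) (auto simp: is_path_def nth_Cons split: nat.split)

lemma is_path_append:
  "is_path sig tau (xs @ ys) \<longleftrightarrow>
     is_path sig tau xs \<and> is_path sig tau ys \<and> (xs \<noteq> [] \<longrightarrow> ys \<noteq> [] \<longrightarrow> tau (last xs) = sig (hd ys))"
  by (induction xs) (auto simp: is_path_Cons is_path_Nil)

lemma is_path_zip:
  "is_path sig tau w \<Longrightarrow> is_path sig tau w' \<Longrightarrow> is_path (map_prod sig sig) (map_prod tau tau) (zip w w')"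
  by (simp add: is_path_def)

lemma closing_path:
  assumes prim: "\<forall>u v. \<exists>p. is_path sig tau p \<and> length p = k \<and> sig (hd p) = u \<and> tau (last p) = v"
    and k: "0 < k" and w: "is_path sig tau w" "w \<noteq> []"
  obtains p where "length p = k" "is_path sig tau (w @ p)" "tau (last (w @ p)) = v"
proof -
  obtain p where p: "is_path sig tau p" "length p = k" "sig (hd p) = tau (last w)" "tau (last p) = v"
    using prim by blast
  then have "p \<noteq> []" using k by auto
  with p w show ?thesis by (intro that) (auto simp: is_path_append)
qed

lemma rotate1_map_closed_path:
  assumes "is_path sig tau c" "c \<noteq> []" "tau (last c) = sig (hd c)"
  shows "map tau c = rotate1 (map sig c)"
proof (rule nth_equalityI)
  fix i assume i: "i < length (map tau c)"
  show "map tau c ! i = rotate1 (map sig c) ! i"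
  proof (cases "Suc i < length c")
    case True
    then have "map tau c ! i = sig (c ! Suc i)" using assms(1) by (simp add: is_path_def)
    then show ?thesis using True assms(2) by (cases c) (auto simp: nth_append)
  next
    case False
    then have "i = length c - 1" using i by simp
    then have "map tau c ! i = sig (hd c)" using assms(2,3) by (simp add: last_conv_nth)
    then show ?thesis using \<open>i = length c - 1\<close> assms(2) by (cases c) (auto simp: nth_append)
  qed
qed simp

lemma sum_count_list_mult:
  fixes f :: "'a::finite \<Rightarrow> real"
  shows "(\<Sum>x\<in>UNIV. real (count_list xs x) * f x) = (\<Sum>i<length xs. f (xs ! i))"
proof (induction xs)
  case (Cons a xs)
  have "real (count_list (a # xs) x) * f x = (if a = x then f x else 0) + real (count_list xs x) * f x"
    for x by (simp add: distrib_right)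
  then have "(\<Sum>x\<in>UNIV. real (count_list (a # xs) x) * f x)
      = f a + (\<Sum>x\<in>UNIV. real (count_list xs x) * f x)"
    by (simp add: sum.distrib)
  with Cons show ?case
    by (simp add: sum.lessThan_Suc_shift del: sum.lessThan_Suc)
qed simp

lemma sum_count_list_UNIV: "(\<Sum>x\<in>(UNIV::'a::finite set). real (count_list xs x)) = real (length xs)"
  using sum_count_set[of xs UNIV] by (simp flip: of_nat_sum)

lemma sum_count_list_fiber:
  fixes f :: "'a::finite \<Rightarrow> 'b"
  shows "(\<Sum>x | f x = y. count_list xs x) = count_list (map f xs) y"
proof (induction xs)
  case (Cons a xs)
  have "(\<Sum>x | f x = y. count_list (a # xs) x)
      = (\<Sum>x | f x = y. count_list xs x + (if a = x then 1 else 0))"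
    by (intro sum.cong) auto
  also have "\<dots> = (\<Sum>x | f x = y. count_list xs x) + (if f a = y then 1 else 0)"
    by (simp add: sum.distrib)
  finally show ?case using Cons by simp
qed simp

lemma count_list_rotate1: "count_list (rotate1 xs) = count_list xs"
  by (cases xs) (simp_all add: fun_eq_iff)

lemma hamming_map_eq_count_list:
  "hamming (map L v) (map L v') = count_list (map (\<lambda>p. L (fst p) \<noteq> L (snd p)) (zip v v')) True"
proof -
  have "{i. i < length v \<and> i < length v' \<and> map L v ! i \<noteq> map L v' ! i}
      = {i. i < length (zip v v') \<and> L (fst (zip v v' ! i)) \<noteq> L (snd (zip v v' ! i))}"
    by auto
  then show ?thesis
    by (simp add: hamming_def count_list_eq_length_filter filter_map length_filter_conv_card o_def)
qed

section \<open>Marginals, transition probabilities and entropy of edge weights\<close>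

lemma vmarg_UNIV: "vmarg sig A u = (\<Sum>e\<in>UNIV. if sig e = u then A e else 0)"
  using sum.inter_filter[of UNIV A "\<lambda>e. sig e = u"] by (simp add: vmarg_def)

lemma vmarg_nonneg: "(\<And>e. 0 \<le> A e) \<Longrightarrow> 0 \<le> vmarg sig A u"
  by (simp add: vmarg_def sum_nonneg)

lemma le_vmarg: "(\<And>e. 0 \<le> A e) \<Longrightarrow> A e \<le> vmarg sig A (sig e)"
  unfolding vmarg_def by (rule member_le_sum) auto

lemma vmarg_le_sum: "(\<And>e. 0 \<le> A e) \<Longrightarrow> vmarg sig A u \<le> (\<Sum>e\<in>UNIV. A e)"
  unfolding vmarg_def by (rule sum_mono2) auto

lemma vmarg_add: "vmarg sig (\<lambda>e. A e + B e) u = vmarg sig A u + vmarg sig B u"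
  by (simp add: vmarg_def sum.distrib)

lemma vmarg_mixture: "vmarg f (\<lambda>x. a * A x + b * B x) y = a * vmarg f A y + b * vmarg f B y"
  by (simp add: vmarg_def sum.distrib sum_distrib_left)

definition transition_prob :: "('e \<Rightarrow> 'v) \<Rightarrow> ('e::finite \<Rightarrow> real) \<Rightarrow> 'e \<Rightarrow> real" where
  "transition_prob sig A e = A e / vmarg sig A (sig e)"

lemma entropy_P_transition_prob:
  "entropy_P sig A = - (\<Sum>e\<in>UNIV. A e * log 2 (transition_prob sig A e))"
  by (simp add: entropy_P_def transition_prob_def)

lemma path_prob_transition_prob:
  "path_prob sig A w = (\<Prod>i<length w. transition_prob sig A (w ! i))"
  by (simp add: path_prob_def transition_prob_def)

lemma path_prob_Cons: "path_prob sig A (e # w) = transition_prob sig A e * path_prob sig A w"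
  by (simp add: path_prob_transition_prob prod.lessThan_Suc_shift del: prod.lessThan_Suc)

lemma transition_prob_pos: "(\<And>e. 0 \<le> A e) \<Longrightarrow> 0 < A e \<Longrightarrow> 0 < transition_prob sig A e"
  using le_vmarg[of A e sig] by (simp add: transition_prob_def)

lemma transition_prob_le_1:
  assumes "\<And>e. 0 \<le> A e"
  shows "transition_prob sig A e \<le> 1"
  using le_vmarg[of A e sig] vmarg_nonneg[of A sig "sig e"] assms
  by (cases "vmarg sig A (sig e) = 0") (simp_all add: transition_prob_def divide_le_eq_1)

lemma path_prob_pos: "(\<And>e. 0 < P e) \<Longrightarrow> 0 < path_prob sig P w"
  unfolding path_prob_transition_prob by (intro prod_pos transition_prob_pos less_imp_le)

lemma entropy_P_scale: "entropy_P sig (\<lambda>e. c * A e) = c * entropy_P sig A"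
proof (cases "c = 0")
  case False
  then have "transition_prob sig (\<lambda>e. c * A e) = transition_prob sig A"
    by (simp add: transition_prob_def vmarg_def fun_eq_iff flip: sum_distrib_left)
  then show ?thesis
    by (simp add: entropy_P_transition_prob sum_distrib_left mult.assoc)
qed (simp add: entropy_P_def)

lemma entropy_P_nonneg:
  assumes "\<And>e. 0 \<le> A e"
  shows "0 \<le> entropy_P sig A"
proof -
  have "A e * log 2 (transition_prob sig A e) \<le> 0" for e
  proof (cases "A e = 0")
    case False
    then have "0 < A e" using assms[of e] by simp
    then have "0 < transition_prob sig A e" by (rule transition_prob_pos[OF assms])
    moreover have "transition_prob sig A e \<le> 1" by (rule transition_prob_le_1[OF assms])
    ultimately have "log 2 (transition_prob sig A e) \<le> 0" by simp
    then show ?thesis using assms[of e] by (simp add: mult_nonneg_nonpos)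
  qed simp
  then show ?thesis unfolding entropy_P_transition_prob by (simp add: sum_nonpos)
qed

lemma entropy_P_le_card:
  fixes A :: "'e::finite \<Rightarrow> real"
  assumes nonneg: "\<And>e. 0 \<le> A e" and sum1: "(\<Sum>e\<in>UNIV. A e) = 1"
  shows "entropy_P sig A \<le> real (card (UNIV :: 'e set)) / ln 2"
proof -
  have "- (A e * log 2 (transition_prob sig A e)) \<le> 1 / ln 2" for e
  proof (cases "A e = 0")
    case False
    define c where "c = vmarg sig A (sig e)"
    have pos: "0 < A e" "A e \<le> c" "c \<le> 1"
      using False nonneg[of e] le_vmarg[of A, OF nonneg] vmarg_le_sum[of A, OF nonneg] sum1
      unfolding c_def
      by (auto simp: order_less_le)
    have "- (A e * ln (A e / c)) = A e * ln (c / A e)"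
      using pos by (simp add: ln_div algebra_simps)
    also have "\<dots> \<le> A e * (c / A e - 1)"
      using pos by (intro mult_left_mono ln_le_minus_one) auto
    also have "\<dots> = c - A e"
      using pos by (simp add: field_simps)
    also have "\<dots> \<le> 1"
      using pos by simp
    finally have "- (A e * ln (A e / c)) / ln 2 \<le> 1 / ln 2"
      by (intro divide_right_mono) auto
    then show ?thesis by (simp add: transition_prob_def log_def c_def)
  qed simp
  then have "(\<Sum>e\<in>UNIV. - (A e * log 2 (transition_prob sig A e))) \<le> (\<Sum>e\<in>(UNIV::'e set). 1 / ln 2)"
    by (intro sum_mono)
  then show ?thesis by (simp add: entropy_P_transition_prob sum_negf)
qed

lemma ln_sum_inequality:
  fixes a b c d :: real
  assumes "0 \<le> a" "a \<le> c" "0 \<le> b" "b \<le> d"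
  shows "(a + b) * ln ((a + b) / (c + d)) \<le> a * ln (a / c) + b * ln (b / d)"
proof (cases "a + b = 0")
  case False
  define r where "r = (a + b) / (c + d)"
  have r: "0 < r" using False assms unfolding r_def by auto
  have gibbs: "x * ln r + x - y * r \<le> x * ln (x / y)" if "0 \<le> x" "x \<le> y" for x y
  proof (cases "x = 0")
    case False
    then have pos: "0 < x" "0 < y" using that by auto
    have "ln (y * r / x) \<le> y * r / x - 1" using pos r by (intro ln_le_minus_one) simp
    then have "x * ln (y * r / x) \<le> y * r - x" using pos by (simp add: field_simps)
    moreover have "x * ln r = x * ln (x / y) + x * ln (y * r / x)"
      using pos r by (simp add: ln_div ln_mult algebra_simps)
    ultimately show ?thesis by simp
  qed (use r that in simp)
  have "a + b - c * r - d * r = 0" using False assms unfolding r_def by (simp add: field_simps)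
  moreover have "(a + b) * ln r = a * ln r + b * ln r" by (simp add: distrib_right)
  ultimately show ?thesis
    using gibbs[OF assms(1,2)] gibbs[OF assms(3,4)] unfolding r_def[symmetric] by linarith
qed (use assms in \<open>simp add: add_nonneg_eq_0_iff\<close>)

lemma entropy_P_superadditive:
  assumes A: "\<And>e. 0 \<le> A e" and B: "\<And>e. 0 \<le> B e"
  shows "entropy_P sig A + entropy_P sig B \<le> entropy_P sig (\<lambda>e. A e + B e)"
proof -
  have ln_ineq: "(A e + B e) * ln ((A e + B e) / (vmarg sig A (sig e) + vmarg sig B (sig e)))
      \<le> A e * ln (A e / vmarg sig A (sig e)) + B e * ln (B e / vmarg sig B (sig e))" for e
    using A B le_vmarg[of A, OF A] le_vmarg[of B, OF B] by (intro ln_sum_inequality)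
  have "(A e + B e) * log 2 ((A e + B e) / vmarg sig (\<lambda>e. A e + B e) (sig e))
      \<le> A e * log 2 (A e / vmarg sig A (sig e)) + B e * log 2 (B e / vmarg sig B (sig e))" for e
    using divide_right_mono[OF ln_ineq[of e], of "ln 2"]
    by (simp add: vmarg_add log_def flip: add_divide_distrib)
  then have "(\<Sum>e\<in>UNIV. (A e + B e) * log 2 ((A e + B e) / vmarg sig (\<lambda>e. A e + B e) (sig e)))
      \<le> (\<Sum>e\<in>UNIV. A e * log 2 (A e / vmarg sig A (sig e)))
        + (\<Sum>e\<in>UNIV. B e * log 2 (B e / vmarg sig B (sig e)))"
    unfolding sum.distrib[symmetric] by (rule sum_mono)
  then show ?thesis unfolding entropy_P_def by linarith
qed

lemma entropy_P_mixture_ge: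
  assumes "\<And>e. 0 \<le> A e" "\<And>e. 0 \<le> B e" "0 \<le> l" "0 \<le> m"
  shows "l * entropy_P sig A \<le> entropy_P sig (\<lambda>e. l * A e + m * B e)"
proof -
  have "0 \<le> entropy_P sig (\<lambda>e. m * B e)" using assms by (intro entropy_P_nonneg) simp
  moreover have "entropy_P sig (\<lambda>e. l * A e) + entropy_P sig (\<lambda>e. m * B e)
      \<le> entropy_P sig (\<lambda>e. l * A e + m * B e)"
    using assms by (intro entropy_P_superadditive) simp_all
  ultimately show ?thesis by (simp add: entropy_P_scale)
qed

section \<open>Empirical distributions and the method of types\<close>

definition empirical :: "'a list \<Rightarrow> 'a \<Rightarrow> real" where
  "empirical xs x = real (count_list xs x) / real (length xs)"

lemma empirical_nonneg: "0 \<le> empirical xs x"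
  by (simp add: empirical_def)

lemma sum_empirical: "xs \<noteq> [] \<Longrightarrow> (\<Sum>x\<in>(UNIV::'a::finite set). empirical xs x) = 1"
  by (simp add: empirical_def sum_count_list_UNIV flip: sum_divide_distrib)

lemma empirical_append:
  "empirical (xs @ ys) x = real (length xs) / real (length (xs @ ys)) * empirical xs x
     + real (length ys) / real (length (xs @ ys)) * empirical ys x"
  by (cases "xs = []"; cases "ys = []") (simp_all add: empirical_def add_divide_distrib)

lemma vmarg_empirical:
  fixes xs :: "'a::finite list"
  shows "vmarg sig (empirical xs) u = real (count_list (map sig xs) u) / real (length xs)"
  by (simp add: vmarg_def empirical_def sum_count_list_fiber flip: sum_divide_distrib of_nat_sum)

lemma stationary_empirical_closed_path:
  fixes c :: "'a::finite list"
  assumes "is_path sig tau c" "c \<noteq> []" "tau (last c) = sig (hd c)"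
  shows "vmarg sig (empirical c) u = vmarg tau (empirical c) u"
  by (simp add: vmarg_empirical rotate1_map_closed_path[OF assms] count_list_rotate1)

lemma log_path_prob:
  fixes A :: "'a::finite \<Rightarrow> real"
  assumes "\<And>e. e \<in> set w \<Longrightarrow> 0 < transition_prob sig A e"
  shows "log 2 (path_prob sig A w) = (\<Sum>e\<in>UNIV. real (count_list w e) * log 2 (transition_prob sig A e))"
proof -
  have "transition_prob sig A (w ! i) \<noteq> 0" if "i < length w" for i
    using assms[OF nth_mem[OF that]] by simp
  then have "ln (path_prob sig A w) = (\<Sum>i<length w. ln (transition_prob sig A (w ! i)))"
    unfolding path_prob_transition_prob by (intro ln_prod) auto
  then have "log 2 (path_prob sig A w) = (\<Sum>i<length w. log 2 (transition_prob sig A (w ! i)))"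
    by (simp add: log_def sum_divide_distrib)
  then show ?thesis by (simp add: sum_count_list_mult)
qed

lemma path_prob_empirical:
  fixes w :: "'a::finite list"
  assumes "w \<noteq> []"
  shows "path_prob sig (empirical w) w = 2 powr (- real (length w) * entropy_P sig (empirical w))"
proof -
  have pos: "0 < transition_prob sig (empirical w) e" if "e \<in> set w" for e
    using that by (intro transition_prob_pos empirical_nonneg)
      (auto simp: empirical_def count_list_0_iff order_less_le)
  have "0 < path_prob sig (empirical w) w"
    unfolding path_prob_transition_prob using pos by (intro prod_pos) (simp add: less_imp_le)
  then have "path_prob sig (empirical w) w = 2 powr log 2 (path_prob sig (empirical w) w)"
    by simp
  also have "log 2 (path_prob sig (empirical w) w) = - real (length w) * entropy_P sig (empirical w)"
    using assms by (simp add: log_path_prob[OF pos] entropy_P_transition_prob empirical_def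
        sum_distrib_left sum_negf)
  finally show ?thesis .
qed

lemma entropy_P_closing_mixture_ge:
  fixes z t :: "'a::finite list" and D :: "'a \<Rightarrow> real"
  assumes s: "0 \<le> s" "s \<le> 1" and D: "\<And>x. 0 \<le> D x"
  shows "s * (real (length z) / real (length (z @ t))) * entropy_P sig (empirical z)
           \<le> entropy_P sig (\<lambda>x. s * empirical (z @ t) x + (1 - s) * D x)"
proof -
  have "real (length z) / real (length (z @ t)) * entropy_P sig (empirical z)
      \<le> entropy_P sig (empirical (z @ t))"
    unfolding empirical_append[abs_def] by (intro entropy_P_mixture_ge empirical_nonneg) simp_all
  then have "s * (real (length z) / real (length (z @ t)) * entropy_P sig (empirical z))
      \<le> s * entropy_P sig (empirical (z @ t))"
    using s(1) by (rule mult_left_mono)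
  also have "\<dots> \<le> entropy_P sig (\<lambda>x. s * empirical (z @ t) x + (1 - s) * D x)"
    using s D by (intro entropy_P_mixture_ge empirical_nonneg) simp_all
  finally show ?thesis by (simp add: mult.assoc)
qed

definition paths_from :: "('a \<Rightarrow> 'v) \<Rightarrow> ('a \<Rightarrow> 'v) \<Rightarrow> nat \<Rightarrow> 'v \<Rightarrow> 'a list set" where
  "paths_from sig tau n u = {w. length w = n \<and> is_path sig tau w \<and> (w \<noteq> [] \<longrightarrow> sig (hd w) = u)}"

lemma finite_paths_from: "finite (paths_from sig tau n u :: 'a::finite list set)"
  by (rule finite_subset[OF _ finite_lists_length_eq[of UNIV n]]) (auto simp: paths_from_def)

lemma paths_from_0: "paths_from sig tau 0 u = {[]}"
  by (auto simp: paths_from_def is_path_def)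

lemma paths_from_Suc:
  "paths_from sig tau (Suc n) u
     = (\<lambda>(e, w). e # w) ` (SIGMA e:{e. sig e = u}. paths_from sig tau n (tau e))"
  by (auto simp: paths_from_def is_path_Cons length_Suc_conv image_iff)

lemma sum_path_prob_paths_from_le_1:
  fixes A :: "'a::finite \<Rightarrow> real"
  assumes nonneg: "\<And>e. 0 \<le> A e"
  shows "(\<Sum>w\<in>paths_from sig tau n u. path_prob sig A w) \<le> 1"
proof (induction n arbitrary: u)
  case 0
  then show ?case by (simp add: paths_from_0 path_prob_def)
next
  case (Suc n)
  have inj: "inj_on (\<lambda>(e, w). e # w) (SIGMA e:{e. sig e = u}. paths_from sig tau n (tau e))"
    by (auto simp: inj_on_def)
  have "(\<Sum>w\<in>paths_from sig tau (Suc n) u. path_prob sig A w)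
      = (\<Sum>(e, w)\<in>(SIGMA e:{e. sig e = u}. paths_from sig tau n (tau e)). path_prob sig A (e # w))"
    unfolding paths_from_Suc sum.reindex[OF inj] by (simp add: case_prod_unfold)
  also have "\<dots> = (\<Sum>e | sig e = u. \<Sum>w\<in>paths_from sig tau n (tau e). path_prob sig A (e # w))"
    by (subst sum.Sigma) (auto simp: finite_paths_from)
  also have "\<dots> = (\<Sum>e | sig e = u.
      transition_prob sig A e * (\<Sum>w\<in>paths_from sig tau n (tau e). path_prob sig A w))"
    by (simp add: path_prob_Cons sum_distrib_left)
  also have "\<dots> \<le> (\<Sum>e | sig e = u. transition_prob sig A e)"
    using Suc.IH nonneg
    by (intro sum_mono mult_left_le) (simp_all add: transition_prob_def vmarg_nonneg)
  also have "\<dots> = vmarg sig A u / vmarg sig A u"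
    by (simp add: transition_prob_def vmarg_def flip: sum_divide_distrib)
  also have "\<dots> \<le> 1"
    by simp
  finally show ?case .
qed

lemma card_empirical_image_le:
  fixes Z :: "'a::finite list set"
  assumes "Z \<subseteq> {w. length w = n}"
  shows "card (empirical ` Z) \<le> (n + 1) ^ card (UNIV :: 'a set)"
proof -
  let ?F = "PiE (UNIV :: 'a set) (\<lambda>_. {..n})"
  have "empirical ` Z \<subseteq> (\<lambda>f x. real (f x) / real n) ` ?F"
  proof
    fix T assume "T \<in> empirical ` Z"
    then obtain w where "w \<in> Z" "T = empirical w" by auto
    with assms have "T = (\<lambda>x. real (count_list w x) / real n)" "count_list w \<in> ?F"
      using count_le_length[of w] by (auto simp: empirical_def fun_eq_iff)
    then show "T \<in> (\<lambda>f x. real (f x) / real n) ` ?F" by blast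
  qed
  then have "card (empirical ` Z) \<le> card ((\<lambda>f x. real (f x) / real n) ` ?F)"
    by (intro card_mono finite_imageI finite_PiE) auto
  also have "\<dots> \<le> card ?F"
    by (intro card_image_le finite_PiE) auto
  finally show ?thesis by (simp add: card_PiE)
qed

lemma sum_path_prob_empirical_le:
  fixes Z :: "'a::finite list set"
  assumes Z: "Z \<subseteq> paths_from sig tau n u"
  shows "(\<Sum>w\<in>Z. path_prob sig (empirical w) w) \<le> real ((n + 1) ^ card (UNIV :: 'a set))"
proof -
  have finZ: "finite Z" using finite_subset[OF Z finite_paths_from] .
  have "(\<Sum>w\<in>Z. path_prob sig (empirical w) w)
      = (\<Sum>T\<in>empirical ` Z. \<Sum>w | w \<in> Z \<and> empirical w = T. path_prob sig T w)"
    by (subst sum.image_gen[OF finZ]) (auto intro!: sum.cong)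
  also have "\<dots> \<le> (\<Sum>T\<in>empirical ` Z. 1)"
  proof (intro sum_mono)
    fix T assume "T \<in> empirical ` Z"
    then have T: "\<And>x. 0 \<le> T x" using empirical_nonneg by auto
    have "(\<Sum>w | w \<in> Z \<and> empirical w = T. path_prob sig T w) \<le> (\<Sum>w\<in>paths_from sig tau n u. path_prob sig T w)"
      using Z T by (intro sum_mono2 finite_paths_from) (auto simp: path_prob_def prod_nonneg vmarg_nonneg)
    also have "\<dots> \<le> 1" by (rule sum_path_prob_paths_from_le_1[OF T])
    finally show "(\<Sum>w | w \<in> Z \<and> empirical w = T. path_prob sig T w) \<le> 1" .
  qed
  also have "\<dots> = real (card (empirical ` Z))"
    by simp
  also have "\<dots> \<le> real ((n + 1) ^ card (UNIV :: 'a set))"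
    using card_empirical_image_le[of Z n] Z by (auto simp only: of_nat_le_iff paths_from_def)
  finally show ?thesis .
qed

definition log_transition_norm :: "('e \<Rightarrow> 'v) \<Rightarrow> ('e::finite \<Rightarrow> real) \<Rightarrow> real" where
  "log_transition_norm sig P = (\<Sum>e\<in>UNIV. \<bar>log 2 (transition_prob sig P e)\<bar>)"

lemma log_path_prob_typical_le:
  fixes P :: "'e::finite \<Rightarrow> real"
  assumes pos: "\<And>e. 0 < P e" and n: "length w = n" "0 < n"
    and typical: "\<And>e. \<bar>real (count_list w e) / real n - P e\<bar> < \<zeta>"
  shows "log 2 (path_prob sig P w) \<le> real n * (\<zeta> * log_transition_norm sig P - entropy_P sig P)"
proof -
  let ?l = "\<lambda>e. log 2 (transition_prob sig P e)"
  have frequency_bound: "(real (count_list w e) / real n) * ?l e \<le> P e * ?l e + \<zeta> * \<bar>?l e\<bar>" for e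
  proof -
    have "(real (count_list w e) / real n - P e) * ?l e \<le> \<bar>real (count_list w e) / real n - P e\<bar> * \<bar>?l e\<bar>"
      by (metis abs_ge_self abs_mult)
    also have "\<dots> \<le> \<zeta> * \<bar>?l e\<bar>"
      using typical[of e] by (intro mult_right_mono) auto
    finally show ?thesis by (simp add: algebra_simps)
  qed
  have "log 2 (path_prob sig P w) = real n * (\<Sum>e\<in>UNIV. (real (count_list w e) / real n) * ?l e)"
    using n pos by (simp add: log_path_prob transition_prob_pos less_imp_le sum_distrib_left)
  also have "\<dots> \<le> real n * (\<Sum>e\<in>UNIV. P e * ?l e + \<zeta> * \<bar>?l e\<bar>)"
    using frequency_bound by (intro mult_left_mono sum_mono) auto
  also have "\<dots> = real n * (\<zeta> * log_transition_norm sig P - entropy_P sig P)"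
    by (simp add: log_transition_norm_def entropy_P_transition_prob sum.distrib sum_distrib_left)
  finally show ?thesis .
qed

section \<open>The product graph and the diagonal coupling\<close>

lemma sum_UNIV_prod: "(\<Sum>p\<in>UNIV. f p) = (\<Sum>a\<in>UNIV. \<Sum>b\<in>UNIV. f (a, b))"
  for f :: "'a::finite \<times> 'b::finite \<Rightarrow> 'c::comm_monoid_add"
  by (simp add: sum.cartesian_product)

lemma Q_init_eq_vmarg: "Q_init sig Q = vmarg (map_prod sig sig) Q"
  by (simp add: fun_eq_iff Q_init_def vmarg_def map_prod_def case_prod_beta)

lemma Q_term_eq_vmarg: "Q_term tau Q = vmarg (map_prod tau tau) Q"
  by (simp add: fun_eq_iff Q_term_def vmarg_def map_prod_def case_prod_beta)

lemma entropy_Q_eq_entropy_P: "entropy_Q sig Q = entropy_P (map_prod sig sig) Q"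
  by (simp add: entropy_Q_def entropy_P_def Q_init_eq_vmarg map_prod_def case_prod_beta)

lemma vmarg_fst: "vmarg fst Q e = (\<Sum>e'\<in>UNIV. Q (e, e'))"
  for Q :: "'a::finite \<times> 'b::finite \<Rightarrow> real"
proof -
  have "(\<Sum>b\<in>UNIV. if a = e then Q (a, b) else 0) = (if a = e then \<Sum>b\<in>UNIV. Q (a, b) else 0)" for a
    by simp
  then show ?thesis by (simp add: vmarg_UNIV sum_UNIV_prod)
qed

lemma vmarg_snd: "vmarg snd Q e = (\<Sum>e'\<in>UNIV. Q (e', e))"
  for Q :: "'a::finite \<times> 'b::finite \<Rightarrow> real"
  by (simp add: vmarg_UNIV sum_UNIV_prod sum.swap[of _ UNIV])

lemma sum_mult_indicator_eq_vmarg: "(\<Sum>x\<in>UNIV. A x * (if f x then 1 else 0)) = vmarg f A True"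
  by (simp add: vmarg_UNIV if_distrib cong: if_cong)

definition diagonal_coupling :: "('e \<Rightarrow> real) \<Rightarrow> 'e \<times> 'e \<Rightarrow> real" where
  "diagonal_coupling P = (\<lambda>(e, e'). if e = e' then P e else 0)"

lemma diagonal_coupling_nonneg: "(\<And>e. 0 \<le> P e) \<Longrightarrow> 0 \<le> diagonal_coupling P p"
  by (simp add: diagonal_coupling_def case_prod_beta)

lemma sum_diagonal_coupling: "(\<Sum>p\<in>UNIV. diagonal_coupling P p) = (\<Sum>e\<in>UNIV. P e)"
  for P :: "'e::finite \<Rightarrow> real"
  by (simp add: sum_UNIV_prod diagonal_coupling_def)

lemma vmarg_diagonal_coupling:
  fixes P :: "'e::finite \<Rightarrow> real"
  shows "vmarg (map_prod sig sig) (diagonal_coupling P) x = (\<Sum>e\<in>UNIV. if (sig e, sig e) = x then P e else 0)"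
proof -
  have "(if map_prod sig sig (e, e') = x then diagonal_coupling P (e, e') else 0)
      = (if e = e' then (if (sig e, sig e) = x then P e else 0) else 0)" for e e'
    by (cases "e = e'") (simp_all add: diagonal_coupling_def)
  then show ?thesis
    unfolding vmarg_UNIV[of "map_prod sig sig"] by (subst sum_UNIV_prod) simp
qed

lemma stationary_diagonal_coupling:
  fixes P :: "'e::finite \<Rightarrow> real"
  assumes "\<forall>u. vmarg sig P u = vmarg tau P u"
  shows "vmarg (map_prod sig sig) (diagonal_coupling P) x = vmarg (map_prod tau tau) (diagonal_coupling P) x"
proof (cases "fst x = snd x")
  case True
  then have "(\<Sum>e\<in>UNIV. if (f e, f e) = x then P e else 0) = vmarg f P (fst x)" for f :: "'e \<Rightarrow> _"
    by (simp add: vmarg_UNIV prod_eq_iff)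
  then show ?thesis using assms by (simp add: vmarg_diagonal_coupling)
next
  case False
  then have "(f e, f e) \<noteq> x" for f :: "'e \<Rightarrow> _" and e by auto
  then show ?thesis by (simp add: vmarg_diagonal_coupling)
qed

lemma vmarg_fst_diagonal_coupling: "vmarg fst (diagonal_coupling P) e = P e"
  for P :: "'e::finite \<Rightarrow> real"
  by (simp add: vmarg_fst diagonal_coupling_def)

lemma vmarg_snd_diagonal_coupling: "vmarg snd (diagonal_coupling P) e = P e"
  for P :: "'e::finite \<Rightarrow> real"
  by (simp add: vmarg_snd diagonal_coupling_def eq_commute[of _ e])

lemma vmarg_disagreement_diagonal_coupling:
  "vmarg (\<lambda>x. L (fst x) \<noteq> L (snd x)) (diagonal_coupling P) True = 0"
  by (auto simp: vmarg_def diagonal_coupling_def intro: sum.neutral)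

section \<open>Closing a bad pair\<close>

lemma divide_add_le_1:
  fixes a b :: real
  assumes "0 \<le> a" "0 \<le> b"
  shows "a / (a + b) \<le> 1"
  using assms by (cases "a + b = 0") (auto simp: divide_le_eq_1)

lemma mixture_weight_bound:
  fixes n k m \<eta> :: real
  assumes "0 < n" "0 \<le> k" "0 < m" "m \<le> \<eta>"
  shows "n * m / (n * m + k) * ((n * \<eta> + k) / (n + k)) \<le> \<eta>"
proof -
  have "n * m * (n * \<eta> + k) \<le> \<eta> * ((n * m + k) * (n + k))"
  proof -
    have "\<eta> * ((n * m + k) * (n + k)) - n * m * (n * \<eta> + k) = n * k * (\<eta> - m) + n * m * k * \<eta> + k * k * \<eta>"
      by (simp add: algebra_simps)
    also have "\<dots> \<ge> 0" using assms by (intro add_nonneg_nonneg mult_nonneg_nonneg) auto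
    finally show ?thesis by simp
  qed
  moreover have "0 < (n * m + k) * (n + k)" using assms by (intro mult_pos_pos add_pos_nonneg) auto
  ultimately show ?thesis by (simp add: field_simps)
qed

lemma mixture_deviation_less:
  fixes a b d n k m \<eta> :: real
  assumes n: "0 < n" and k: "0 \<le> k" and m: "0 < m" "m \<le> \<eta>"
    and a: "\<bar>a / n - d\<bar> < \<eta>" and b: "0 \<le> b" "b \<le> k" and d: "0 \<le> d" "d \<le> 1"
  shows "\<bar>n * m / (n * m + k) * ((a + b) / (n + k)) + (1 - n * m / (n * m + k)) * d - d\<bar> < \<eta>"
proof -
  define s where "s = n * m / (n * m + k)"
  have s: "0 < s" unfolding s_def using n m k by (simp add: add_pos_nonneg)
  have "n * (a / n - d) = a - n * d" using n by (simp add: field_simps)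
  then have "n * \<bar>a / n - d\<bar> = \<bar>a - n * d\<bar>" using n by (metis abs_mult abs_of_pos)
  then have "\<bar>a + b - (n + k) * d\<bar> \<le> n * \<bar>a / n - d\<bar> + \<bar>b - k * d\<bar>"
    using abs_triangle_ineq[of "a - n * d" "b - k * d"] by (simp add: algebra_simps)
  also have "\<dots> < n * \<eta> + k"
  proof (rule add_less_le_mono)
    show "n * \<bar>a / n - d\<bar> < n * \<eta>" using n a by simp
    have "0 \<le> k * d" "k * d \<le> k" using k d by (simp_all add: mult_left_le)
    then show "\<bar>b - k * d\<bar> \<le> k" using b unfolding abs_le_iff by linarith
  qed
  finally have "\<bar>a + b - (n + k) * d\<bar> / (n + k) < (n * \<eta> + k) / (n + k)"
    using n k by (intro divide_strict_right_mono) auto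
  moreover have "(a + b) / (n + k) - d = (a + b - (n + k) * d) / (n + k)"
    using n k by (simp add: field_simps)
  ultimately have "\<bar>(a + b) / (n + k) - d\<bar> < (n * \<eta> + k) / (n + k)"
    using n k by simp
  then have "s * \<bar>(a + b) / (n + k) - d\<bar> < s * ((n * \<eta> + k) / (n + k))"
    using s by (rule mult_strict_left_mono)
  also have "\<dots> \<le> \<eta>"
    unfolding s_def using mixture_weight_bound[OF n k m] .
  finally have "\<bar>s * ((a + b) / (n + k) - d)\<bar> < \<eta>"
    using s by (simp add: abs_mult)
  moreover have "s * ((a + b) / (n + k)) + (1 - s) * d - d = s * ((a + b) / (n + k) - d)"
    by (simp add: algebra_simps)
  ultimately show ?thesis unfolding s_def by simp
qed

text \<open>
  Closing the pair by paths of length k makes its empirical distribution stationary but moves the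
  marginals and the disagreement by up to k/(n + k); mixing in the diagonal coupling, which has
  marginals P and no disagreement, with weight 1 - s for s = n m / (n m + k) brings them back within
  the tolerances \<open>\<zeta>\<close> and \<open>\<delta>\<close>.
\<close>

lemma closing_mixture_in_A_set:
  fixes w w' p p' :: "'e::finite list"
  assumes stat: "stationary_edge_pmf sig tau P"
    and typical: "w \<in> typical_paths sig tau P vroot \<zeta> n" "w' \<in> typical_paths sig tau P vroot \<zeta> n"
    and ham: "real (hamming (map L w) (map L w')) / real n < \<delta>"
    and closed: "is_path sig tau (w @ p)" "tau (last (w @ p)) = vroot"
      "is_path sig tau (w' @ p')" "tau (last (w' @ p')) = vroot"
    and len: "length p' = length p"
    and m: "0 < m" "m \<le> \<zeta>" "m \<le> \<delta>"
  defines "s \<equiv> real n * m / (real n * m + real (length p))"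
  shows "(\<lambda>x. s * empirical (zip (w @ p) (w' @ p')) x + (1 - s) * diagonal_coupling P x)
           \<in> A_set sig tau L P \<zeta> \<delta>"
proof -
  define c where "c = zip (w @ p) (w' @ p')"
  define Q where "Q = (\<lambda>x. s * empirical c x + (1 - s) * diagonal_coupling P x)"
  define k where "k = length p"
  have P: "\<And>e. 0 < P e" "(\<Sum>e\<in>UNIV. P e) = 1" "\<forall>u. vmarg sig P u = vmarg tau P u"
    using stat by (auto simp: stationary_edge_pmf_def)
  have P_le_1: "P e \<le> 1" for e
    using member_le_sum[of e UNIV P] P(1,2) by (simp add: less_imp_le)
  have w: "length w = n" "w \<noteq> []" "sig (hd w) = vroot" "\<And>e. \<bar>real (count_list w e) / real n - P e\<bar> < \<zeta>"
    and w': "length w' = n" "w' \<noteq> []" "sig (hd w') = vroot" "\<And>e. \<bar>real (count_list w' e) / real n - P e\<bar> < \<zeta>"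
    using typical by (auto simp: typical_paths_def)
  have n: "0 < n" using w(1,2) by auto
  have lc: "length c = n + k" and c_ne: "c \<noteq> []"
    using w w' len by (auto simp: c_def k_def)
  have s: "0 \<le> s" "s \<le> 1" using m by (simp_all add: s_def divide_add_le_1)
  have "last c = (last (w @ p), last (w' @ p'))" "hd c = (hd (w @ p), hd (w' @ p'))"
    using w w' len unfolding c_def by (simp_all add: last_zip hd_zip del: zip_append)
  then have c_closed: "map_prod tau tau (last c) = map_prod sig sig (hd c)"
    using closed w w' by simp
  have stationary: "Q_init sig Q x = Q_term tau Q x" for x
    using stationary_empirical_closed_path[OF is_path_zip[OF closed(1,3)] _ c_closed[unfolded c_def]]
      c_ne stationary_diagonal_coupling[OF P(3)]
    by (simp add: Q_init_eq_vmarg Q_term_eq_vmarg Q_def vmarg_mixture c_def)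
  have marginal: "\<bar>vmarg f Q e - P e\<bar> < \<zeta>"
    if "map f c = u @ q" "\<bar>real (count_list u e) / real n - P e\<bar> < \<zeta>" "length q = k"
      "vmarg f (diagonal_coupling P) e = P e" for f :: "'e \<times> 'e \<Rightarrow> 'e" and u q e
  proof -
    have "vmarg f Q e = s * ((real (count_list u e) + real (count_list q e)) / (real n + real k))
        + (1 - s) * P e"
      using that lc by (simp add: Q_def vmarg_mixture vmarg_empirical)
    moreover have "real (count_list q e) \<le> real k"
      using count_le_length[of q e] that(3) by simp
    ultimately show ?thesis
      using mixture_deviation_less[of n k m \<zeta> "count_list u e" "P e" "count_list q e"]
        n m that(2) P(1)[of e] P_le_1[of e] by (simp add: s_def k_def less_imp_le)
  qed
  have "\<bar>vmarg fst Q e - P e\<bar> < \<zeta>" for e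
    using w w' len by (intro marginal[of fst w p]) (simp_all add: c_def k_def vmarg_fst_diagonal_coupling)
  moreover have "\<bar>vmarg snd Q e - P e\<bar> < \<zeta>" for e
    using w w' len by (intro marginal[of snd w' p']) (simp_all add: c_def k_def vmarg_snd_diagonal_coupling)
  moreover have "(\<Sum>x\<in>UNIV. Q x * (if L (fst x) \<noteq> L (snd x) then 1 else 0)) \<le> \<delta>"
  proof -
    let ?f = "\<lambda>x. L (fst x) \<noteq> L (snd x)"
    have "count_list (map ?f c) True
        = hamming (map L w) (map L w') + count_list (map ?f (zip p p')) True"
      using w w' by (simp add: c_def hamming_map_eq_count_list)
    moreover have "count_list (map ?f (zip p p')) True \<le> k"
      using count_le_length[of "map ?f (zip p p')" True] len by (simp add: k_def)
    ultimately have "vmarg ?f Q True = s * ((real (hamming (map L w) (map L w'))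
        + real (count_list (map ?f (zip p p')) True)) / (real n + real k)) + (1 - s) * 0"
      using lc by (simp add: Q_def vmarg_mixture vmarg_empirical vmarg_disagreement_diagonal_coupling)
    then have "\<bar>vmarg ?f Q True - 0\<bar> < \<delta>"
      using mixture_deviation_less[of n k m \<delta> "hamming (map L w) (map L w')" 0
          "count_list (map ?f (zip p p')) True", unfolded k_def, folded s_def]
        n m ham \<open>count_list (map ?f (zip p p')) True \<le> k\<close> by (simp add: k_def)
    then show ?thesis by (simp add: sum_mult_indicator_eq_vmarg)
  qed
  moreover have "0 \<le> Q x" for x
    using s P(1) by (simp add: Q_def empirical_nonneg diagonal_coupling_nonneg less_imp_le)
  moreover have "(\<Sum>x\<in>UNIV. Q x) = 1"
    using c_ne P(2) by (simp add: Q_def sum.distrib sum_empirical sum_diagonal_coupling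
        flip: sum_distrib_left)
  ultimately show ?thesis
    using stationary unfolding Q_def c_def
    by (simp add: A_set_def stationary_prod_measures_def vmarg_fst vmarg_snd)
qed

definition closing_factor :: "nat \<Rightarrow> real \<Rightarrow> nat \<Rightarrow> real" where
  "closing_factor n m k = real n * m / (real n * m + real k) * (real n / (real n + real k))"

lemma closing_factor_le_1: "0 \<le> m \<Longrightarrow> closing_factor n m k \<le> 1"
  unfolding closing_factor_def
  by (intro mult_le_one divide_add_le_1) simp_all

lemma closing_factor_tendsto_1: "0 < m \<Longrightarrow> (\<lambda>n. closing_factor n m k) \<longlonglongrightarrow> 1"
  unfolding closing_factor_def by real_asymp

lemma A_set_entropy_ge_bad_pair:
  fixes sig tau :: "'e::finite \<Rightarrow> 'v" and L :: "'e \<Rightarrow> 'l"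
  assumes stat: "stationary_edge_pmf sig tau P" and k: "0 < k"
    and prim: "\<forall>u v. \<exists>p. is_path sig tau p \<and> length p = k \<and> sig (hd p) = u \<and> tau (last p) = v"
    and typical: "w \<in> typical_paths sig tau P vroot \<zeta> n" "w' \<in> typical_paths sig tau P vroot \<zeta> n"
    and ham: "real (hamming (map L w) (map L w')) / real n < \<delta>" and \<zeta>: "0 < \<zeta>"
  shows "\<exists>Q\<in>A_set sig tau L P \<zeta> \<delta>.
           closing_factor n (min \<zeta> \<delta>) k * entropy_Q sig (empirical (zip w w')) \<le> entropy_Q sig Q"
proof -
  have w: "is_path sig tau w" "w \<noteq> []" "length w = n"
    and w': "is_path sig tau w'" "w' \<noteq> []" "length w' = n"
    using typical by (auto simp: typical_paths_def)
  obtain p where p: "length p = k" "is_path sig tau (w @ p)" "tau (last (w @ p)) = vroot"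
    using closing_path[OF prim k w(1,2)] .
  obtain p' where p': "length p' = k" "is_path sig tau (w' @ p')" "tau (last (w' @ p')) = vroot"
    using closing_path[OF prim k w'(1,2)] .
  have "0 \<le> real (hamming (map L w) (map L w')) / real n" by simp
  then have m: "0 < min \<zeta> \<delta>" using ham \<zeta> by linarith
  define s where "s = real n * min \<zeta> \<delta> / (real n * min \<zeta> \<delta> + real (length p))"
  define Q where "Q = (\<lambda>x. s * empirical (zip (w @ p) (w' @ p')) x + (1 - s) * diagonal_coupling P x)"
  have "Q \<in> A_set sig tau L P \<zeta> \<delta>"
    unfolding Q_def s_def using m p p'
    by (intro closing_mixture_in_A_set[OF stat typical ham]) simp_all
  moreover have "closing_factor n (min \<zeta> \<delta>) k * entropy_Q sig (empirical (zip w w')) \<le> entropy_Q sig Q"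
  proof -
    have "0 \<le> s" "s \<le> 1" using m by (simp_all add: s_def divide_add_le_1)
    moreover have "0 \<le> diagonal_coupling P x" for x
      using stat by (intro diagonal_coupling_nonneg) (simp add: stationary_edge_pmf_def less_imp_le)
    ultimately have "s * (real (length (zip w w')) / real (length (zip w w' @ zip p p')))
        * entropy_P (map_prod sig sig) (empirical (zip w w'))
        \<le> entropy_P (map_prod sig sig) (\<lambda>x. s * empirical (zip w w' @ zip p p') x
          + (1 - s) * diagonal_coupling P x)"
      by (rule entropy_P_closing_mixture_ge)
    then show ?thesis
      using w w' p p' by (simp add: Q_def closing_factor_def entropy_Q_eq_entropy_P s_def)
  qed
  ultimately show ?thesis by blast
qed

section \<open>The exponential bound on the bad mass\<close>

definition bad_pairs ::
  "('e::finite \<Rightarrow> 'v) \<Rightarrow> ('e \<Rightarrow> 'v) \<Rightarrow> ('e \<Rightarrow> 'l) \<Rightarrow> ('e \<Rightarrow> real) \<Rightarrow> 'v \<Rightarrow> real \<Rightarrow> real \<Rightarrow> nat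
     \<Rightarrow> ('e list \<times> 'e list) set" where
  "bad_pairs sig tau L P vroot \<zeta> \<delta> n =
     {(w, w'). w \<in> typical_paths sig tau P vroot \<zeta> n \<and> w' \<in> typical_paths sig tau P vroot \<zeta> n
        \<and> w \<noteq> w' \<and> real (hamming (map L w) (map L w')) / real n < \<delta>}"

lemma P_bad_eq_sum_bad_pairs:
  "P_bad sig tau L P vroot \<zeta> \<delta> n
     = (\<Sum>(w, w')\<in>bad_pairs sig tau L P vroot \<zeta> \<delta> n. path_prob sig P w * path_prob sig P w')"
  unfolding P_bad_def bad_pairs_def ..

lemma entropy_empirical_bad_pair_le:
  fixes sig tau :: "'e::finite \<Rightarrow> 'v" and L :: "'e \<Rightarrow> 'l"
  assumes stat: "stationary_edge_pmf sig tau P" and k: "0 < k"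
    and prim: "\<forall>u v. \<exists>p. is_path sig tau p \<and> length p = k \<and> sig (hd p) = u \<and> tau (last p) = v"
    and \<zeta>: "0 < \<zeta>" and pair: "(w, w') \<in> bad_pairs sig tau L P vroot \<zeta> \<delta> n"
    and A_bound: "\<And>Q. Q \<in> A_set sig tau L P \<zeta> \<delta> \<Longrightarrow> entropy_Q sig Q \<le> 2 * entropy_P sig P - I"
  defines "B \<equiv> real (card (UNIV :: ('e \<times> 'e) set)) / ln 2"
  shows "entropy_Q sig (empirical (zip w w'))
           \<le> 2 * entropy_P sig P - I + (1 - closing_factor n (min \<zeta> \<delta>) k) * B"
proof -
  define r where "r = closing_factor n (min \<zeta> \<delta>) k"
  define T where "T = empirical (zip w w')"
  have typical: "w \<in> typical_paths sig tau P vroot \<zeta> n" "w' \<in> typical_paths sig tau P vroot \<zeta> n"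
    and ham: "real (hamming (map L w) (map L w')) / real n < \<delta>"
    using pair by (auto simp: bad_pairs_def)
  have "0 \<le> real (hamming (map L w) (map L w')) / real n" by simp
  then have "0 \<le> min \<zeta> \<delta>" using ham \<zeta> by linarith
  then have "r \<le> 1" by (simp add: r_def closing_factor_le_1)
  obtain Q where "Q \<in> A_set sig tau L P \<zeta> \<delta>" "r * entropy_Q sig T \<le> entropy_Q sig Q"
    using A_set_entropy_ge_bad_pair[OF stat k prim typical ham \<zeta>] by (auto simp: r_def T_def)
  then have rT: "r * entropy_Q sig T \<le> 2 * entropy_P sig P - I" using A_bound by fastforce
  have "zip w w' \<noteq> []" using typical by (auto simp: typical_paths_def)
  then have "entropy_Q sig T \<le> B"
    unfolding B_def T_def entropy_Q_eq_entropy_P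
    by (intro entropy_P_le_card empirical_nonneg sum_empirical)
  then have "(1 - r) * entropy_Q sig T \<le> (1 - r) * B"
    using \<open>r \<le> 1\<close> by (intro mult_left_mono) auto
  with rT show ?thesis by (simp add: r_def T_def left_diff_distrib)
qed

lemma bad_pair_prob_le:
  fixes sig tau :: "'e::finite \<Rightarrow> 'v" and L :: "'e \<Rightarrow> 'l"
  assumes stat: "stationary_edge_pmf sig tau P" and k: "0 < k"
    and prim: "\<forall>u v. \<exists>p. is_path sig tau p \<and> length p = k \<and> sig (hd p) = u \<and> tau (last p) = v"
    and \<zeta>: "0 < \<zeta>" and pair: "(w, w') \<in> bad_pairs sig tau L P vroot \<zeta> \<delta> n"
    and A_bound: "\<And>Q. Q \<in> A_set sig tau L P \<zeta> \<delta> \<Longrightarrow> entropy_Q sig Q \<le> 2 * entropy_P sig P - I"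
  defines "R \<equiv> 2 * log_transition_norm sig P * \<zeta> - I
      + (1 - closing_factor n (min \<zeta> \<delta>) k) * (real (card (UNIV :: ('e \<times> 'e) set)) / ln 2)"
  shows "path_prob sig P w * path_prob sig P w'
     \<le> 2 powr (real n * R) * path_prob (map_prod sig sig) (empirical (zip w w')) (zip w w')"
proof -
  define H where "H = entropy_Q sig (empirical (zip w w'))"
  have P: "\<And>e. 0 < P e" using stat by (simp add: stationary_edge_pmf_def)
  have w: "length w = n" "w \<noteq> []" "\<And>e. \<bar>real (count_list w e) / real n - P e\<bar> < \<zeta>"
    and w': "length w' = n" "w' \<noteq> []" "\<And>e. \<bar>real (count_list w' e) / real n - P e\<bar> < \<zeta>"
    using pair by (auto simp: bad_pairs_def typical_paths_def)
  have n: "0 < n" using w(1,2) by auto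
  have "log 2 (path_prob sig P w) \<le> real n * (\<zeta> * log_transition_norm sig P - entropy_P sig P)"
    "log 2 (path_prob sig P w') \<le> real n * (\<zeta> * log_transition_norm sig P - entropy_P sig P)"
    using log_path_prob_typical_le[OF P w(1) n w(3)] log_path_prob_typical_le[OF P w'(1) n w'(3)] .
  moreover have "real n * H \<le> real n * (R - 2 * log_transition_norm sig P * \<zeta> + 2 * entropy_P sig P)"
    using entropy_empirical_bad_pair_le[OF stat k prim \<zeta> pair A_bound]
    by (intro mult_left_mono) (simp_all add: H_def R_def)
  ultimately have "log 2 (path_prob sig P w) + log 2 (path_prob sig P w') \<le> real n * R - real n * H"
    by (simp add: algebra_simps)
  then have "2 powr (log 2 (path_prob sig P w) + log 2 (path_prob sig P w')) \<le> 2 powr (real n * R - real n * H)"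
    by (rule powr_mono) simp
  then have "path_prob sig P w * path_prob sig P w' \<le> 2 powr (real n * R - real n * H)"
    using path_prob_pos[of P sig, OF P] by (simp add: powr_add)
  also have "\<dots> = 2 powr (real n * R) * path_prob (map_prod sig sig) (empirical (zip w w')) (zip w w')"
    using w w' by (simp add: H_def path_prob_empirical entropy_Q_eq_entropy_P powr_diff powr_minus
        divide_inverse)
  finally show ?thesis .
qed

lemma P_bad_le:
  fixes sig tau :: "'e::finite \<Rightarrow> 'v" and L :: "'e \<Rightarrow> 'l" and n :: nat
  assumes stat: "stationary_edge_pmf sig tau P" and k: "0 < k"
    and prim: "\<forall>u v. \<exists>p. is_path sig tau p \<and> length p = k \<and> sig (hd p) = u \<and> tau (last p) = v"
    and \<zeta>: "0 < \<zeta>"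
    and A_bound: "\<And>Q. Q \<in> A_set sig tau L P \<zeta> \<delta> \<Longrightarrow> entropy_Q sig Q \<le> 2 * entropy_P sig P - I"
  defines "R \<equiv> 2 * log_transition_norm sig P * \<zeta> - I
      + (1 - closing_factor n (min \<zeta> \<delta>) k) * (real (card (UNIV :: ('e \<times> 'e) set)) / ln 2)"
  shows "P_bad sig tau L P vroot \<zeta> \<delta> n \<le> 2 powr (real n * R) * (real n + 1) ^ card (UNIV :: ('e \<times> 'e) set)"
proof -
  define E where "E = 2 powr (real n * R)"
  define Bad where "Bad = bad_pairs sig tau L P vroot \<zeta> \<delta> n"
  define pair_path where "pair_path = (\<lambda>(w, w'). zip w w' :: ('e \<times> 'e) list)"
  have inj: "inj_on pair_path Bad"
  proof (rule inj_onI)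
    fix x y assume "x \<in> Bad" "y \<in> Bad" "pair_path x = pair_path y"
    then show "x = y"
      by (cases x; cases y) (auto simp: pair_path_def Bad_def bad_pairs_def typical_paths_def
          zip_eq_conv)
  qed
  have paths: "pair_path ` Bad \<subseteq> paths_from (map_prod sig sig) (map_prod tau tau) n (vroot, vroot)"
    by (auto simp: pair_path_def Bad_def bad_pairs_def typical_paths_def paths_from_def
        is_path_zip hd_zip)
  have "path_prob sig P w * path_prob sig P w'
      \<le> E * path_prob (map_prod sig sig) (empirical (zip w w')) (zip w w')" if "(w, w') \<in> Bad" for w w'
    using bad_pair_prob_le[OF stat k prim \<zeta> that[unfolded Bad_def] A_bound] unfolding E_def R_def .
  then have "P_bad sig tau L P vroot \<zeta> \<delta> n
      \<le> (\<Sum>x\<in>Bad. E * path_prob (map_prod sig sig) (empirical (pair_path x)) (pair_path x))"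
    unfolding P_bad_eq_sum_bad_pairs Bad_def[symmetric] pair_path_def by (intro sum_mono) auto
  also have "\<dots> = E * (\<Sum>z\<in>pair_path ` Bad. path_prob (map_prod sig sig) (empirical z) z)"
    by (simp add: sum.reindex[OF inj] sum_distrib_left)
  also have "\<dots> \<le> E * real ((n + 1) ^ card (UNIV :: ('e \<times> 'e) set))"
    using sum_path_prob_empirical_le[OF paths] by (intro mult_left_mono) (simp_all add: E_def)
  finally show ?thesis by (simp add: E_def add.commute)
qed

lemma limsup_log_rate_le:
  fixes p a :: "nat \<Rightarrow> real"
  assumes nonneg: "\<And>n. 0 \<le> p n"
    and bound: "\<And>n. 0 < n \<Longrightarrow> p n \<le> 2 powr (real n * a n) * (real n + 1) ^ M"
    and lim: "a \<longlonglongrightarrow> a0"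
  shows "limsup (\<lambda>n. log_rate (p n) n) \<le> ereal a0"
proof -
  define g where "g = (\<lambda>n. a n + real M * log 2 (real n + 1) / real n)"
  have "log_rate (p n) n \<le> ereal (g n)" if n: "0 < n" for n
  proof (cases "p n = 0")
    case False
    then have "0 < p n" using nonneg[of n] by simp
    then have "log 2 (p n) \<le> log 2 (2 powr (real n * a n) * (real n + 1) ^ M)"
      using bound[OF n] by simp
    also have "\<dots> = real n * a n + real M * log 2 (real n + 1)"
      by (simp add: log_mult log_nat_power)
    finally have "log 2 (p n) / real n \<le> (real n * a n + real M * log 2 (real n + 1)) / real n"
      by (rule divide_right_mono) simp
    with n False show ?thesis by (simp add: log_rate_def g_def add_divide_distrib)
  qed (simp add: log_rate_def)
  then have "limsup (\<lambda>n. log_rate (p n) n) \<le> limsup (\<lambda>n. ereal (g n))"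
    by (intro Limsup_mono) (auto simp: eventually_sequentially intro: exI[of _ 1])
  also have "limsup (\<lambda>n. ereal (g n)) = ereal a0"
  proof -
    have "(\<lambda>n. real M * log 2 (real n + 1) / real n) \<longlonglongrightarrow> 0"
      by real_asymp
    then have "g \<longlonglongrightarrow> a0"
      unfolding g_def using tendsto_add[OF lim] by fastforce
    then show ?thesis
      by (intro lim_imp_Limsup) simp_all
  qed
  finally show ?thesis .
qed

lemma INF_minus_entropy_Q_finite:
  fixes A :: "('e::finite \<times> 'e \<Rightarrow> real) set"
  assumes "A \<subseteq> stationary_prod_measures sig tau" and "A \<noteq> {}"
  obtains I where "(INF Q\<in>A. ereal (c - entropy_Q sig Q)) = ereal I"
    and "\<And>Q. Q \<in> A \<Longrightarrow> entropy_Q sig Q \<le> c - I"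
proof -
  define B where "B = real (card (UNIV :: ('e \<times> 'e) set)) / ln 2"
  have "entropy_Q sig Q \<le> B" if "Q \<in> A" for Q
    using that assms(1) unfolding B_def entropy_Q_eq_entropy_P
    by (intro entropy_P_le_card) (auto simp: stationary_prod_measures_def)
  then have "ereal (c - B) \<le> (INF Q\<in>A. ereal (c - entropy_Q sig Q))"
    by (intro INF_greatest) simp
  moreover obtain Q0 where "Q0 \<in> A" using assms(2) by blast
  then have "(INF Q\<in>A. ereal (c - entropy_Q sig Q)) \<le> ereal (c - entropy_Q sig Q0)"
    by (rule INF_lower)
  ultimately obtain I where I: "(INF Q\<in>A. ereal (c - entropy_Q sig Q)) = ereal I"
    by (cases "INF Q\<in>A. ereal (c - entropy_Q sig Q)") auto
  moreover have "entropy_Q sig Q \<le> c - I" if "Q \<in> A" for Q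
    using INF_lower[OF that, of "\<lambda>Q. ereal (c - entropy_Q sig Q)"] unfolding I by simp
  ultimately show ?thesis by (rule that)
qed

lemma limsup_log_rate_P_bad_le:
  fixes sig tau :: "'e::finite \<Rightarrow> 'v" and L :: "'e \<Rightarrow> 'l"
  assumes stat: "stationary_edge_pmf sig tau P" and k: "0 < k"
    and prim: "\<forall>u v. \<exists>p. is_path sig tau p \<and> length p = k \<and> sig (hd p) = u \<and> tau (last p) = v"
    and \<zeta>: "0 < \<zeta>"
  shows "limsup (\<lambda>n. log_rate (P_bad sig tau L P vroot \<zeta> \<delta> n) n)
           \<le> - (INF Q\<in>A_set sig tau L P \<zeta> \<delta>. ereal (2 * entropy_P sig P - entropy_Q sig Q))
             + ereal (2 * log_transition_norm sig P * \<zeta>)"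
proof (cases "\<exists>n. bad_pairs sig tau L P vroot \<zeta> \<delta> n \<noteq> {}")
  case False
  then have "(\<lambda>n. log_rate (P_bad sig tau L P vroot \<zeta> \<delta> n) n) = (\<lambda>n. -\<infinity>)"
    by (simp add: P_bad_eq_sum_bad_pairs log_rate_def)
  then show ?thesis by (simp add: Limsup_const)
next
  case True
  then obtain n w w' where pair: "(w, w') \<in> bad_pairs sig tau L P vroot \<zeta> \<delta> n" by auto
  then have "0 \<le> real (hamming (map L w) (map L w')) / real n"
    "real (hamming (map L w) (map L w')) / real n < \<delta>"
    by (simp_all add: bad_pairs_def)
  then have m: "0 < min \<zeta> \<delta>" using \<zeta> by linarith
  have A_ne: "A_set sig tau L P \<zeta> \<delta> \<noteq> {}"
    using pair A_set_entropy_ge_bad_pair[OF stat k prim _ _ _ \<zeta>] by (fastforce simp: bad_pairs_def)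
  obtain I
    where I: "(INF Q\<in>A_set sig tau L P \<zeta> \<delta>. ereal (2 * entropy_P sig P - entropy_Q sig Q)) = ereal I"
      and A_bound: "\<And>Q. Q \<in> A_set sig tau L P \<zeta> \<delta> \<Longrightarrow> entropy_Q sig Q \<le> 2 * entropy_P sig P - I"
    by (rule INF_minus_entropy_Q_finite[OF _ A_ne]) (auto simp: A_set_def)
  define B where "B = real (card (UNIV :: ('e \<times> 'e) set)) / ln 2"
  have "limsup (\<lambda>n. log_rate (P_bad sig tau L P vroot \<zeta> \<delta> n) n)
      \<le> ereal (2 * log_transition_norm sig P * \<zeta> - I + (1 - 1) * B)"
  proof (rule limsup_log_rate_le)
    show "0 \<le> P_bad sig tau L P vroot \<zeta> \<delta> n" for n
      using stat unfolding P_bad_eq_sum_bad_pairs stationary_edge_pmf_def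
      by (intro sum_nonneg) (auto intro!: less_imp_le mult_pos_pos path_prob_pos)
    show "P_bad sig tau L P vroot \<zeta> \<delta> n
        \<le> 2 powr (real n * (2 * log_transition_norm sig P * \<zeta> - I
            + (1 - closing_factor n (min \<zeta> \<delta>) k) * B)) * (real n + 1) ^ card (UNIV :: ('e \<times> 'e) set)"
      for n
      unfolding B_def by (rule P_bad_le[OF stat k prim \<zeta> A_bound])
    show "(\<lambda>n. 2 * log_transition_norm sig P * \<zeta> - I + (1 - closing_factor n (min \<zeta> \<delta>) k) * B)
        \<longlonglongrightarrow> 2 * log_transition_norm sig P * \<zeta> - I + (1 - 1) * B"
      by (intro tendsto_intros closing_factor_tendsto_1 m)
  qed
  then show ?thesis unfolding I by simp
qed

theorem lemma3:
  fixes sig tau :: "'e::finite \<Rightarrow> 'v::finite" and L :: "'e \<Rightarrow> 'l::finite"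
    and P :: "'e \<Rightarrow> real" and vroot :: 'v
  assumes "deterministic sig L" and "lossless sig tau L" and "primitive sig tau"
    and "stationary_edge_pmf sig tau P"
  shows "\<exists>C::real. \<forall>\<alpha> \<zeta> \<epsilon>::real.
     0 < \<alpha> \<and> \<alpha> < 1 \<and> 0 < \<zeta> \<and> \<zeta> < (1 - \<alpha>) / \<alpha> * Pmin P \<and> 0 < \<epsilon> \<longrightarrow>
     (let S = (\<Sum>a\<in>UNIV. (\<Sum>e\<in>{e. L e = a}. P e)\<^sup>2);
          \<delta> = 1 - S - \<epsilon>
      in limsup (\<lambda>n. log_rate (P_bad sig tau L P vroot \<zeta> \<delta> n) n)
           \<le> - (INF Q\<in>A_set sig tau L P \<zeta> \<delta>. ereal (2 * entropy_P sig P - entropy_Q sig Q))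
             + ereal (C * \<zeta>))"
proof -
  obtain k where k: "0 < k"
    and prim: "\<forall>u v. \<exists>p. is_path sig tau p \<and> length p = k \<and> sig (hd p) = u \<and> tau (last p) = v"
    using assms(3) unfolding primitive_def by blast
  show ?thesis
    using limsup_log_rate_P_bad_le[OF assms(4) k prim]
    by (intro exI[of _ "2 * log_transition_norm sig P"]) (auto simp: Let_def mult.assoc)
qed

end
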